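(* A pattern $P\in\{0,1\}^{k\times\ell}$ that avoids $D_2$ or avoids $\overline{D}_2$ is row-bounding, i.e., $\mathrm{Av}(P)$ is row-bounded.
   Context: All matrices are binary; rows numbered top to bottom, columns left to right; $(i,j)$ is the entry in row $i$, column $j$; $(a,b]=\{a+1,\dots,b\}$. $D_2\in\{0,1\}^{2\times2}$ has 1-entries exactly at $(1,1),(2,2)$; $\overline D_2$ has 1-entries exactly at $(1,2),(2,1)$. A pattern $P\in\{0,1\}^{k\times\ell}$ is an interval minor of $M\in\{0,1\}^{m\times n}$ if there are integers $0=r_0<\dots<r_k=m$ and $0=c_0<\dots<c_\ell=n$ such that for each 1-entry $(i,j)$ of $P$ the submatrix of $M$ on rows $(r_{i-1},r_i]$ and columns $(c_{j-1},c_j]$ contains a 1-entry; otherwise $M$ avoids $P$. $\mathrm{Av}(P)$ is the set of binary matrices avoiding $P$. $M\in\mathrm{Av}(P)$ is critical if changing any single 0-entry of $M$ to a 1-entry produces a matrix containing $P$. A horizontal 0-run is a maximal set of consecutive 0-entries within one row; the complexity of a row is the number of such runs. $\mathrm{Av}(P)$ is row-bounded (and $P$ row-bounding) if there is a constant bounding the complexity of every row of every critical matrix in $\mathrm{Av}(P)$. *)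

theory Defs
  imports Main
begin

text \<open>A binary matrix with m rows and n columns is represented by its dimensions together
  with a predicate M :: nat => nat => bool, where M i j means that entry (i,j) is a 1-entry.
  Rows are indexed 1..m and columns 1..n; values of M outside this range are irrelevant.\<close>

definition contains :: "nat \<Rightarrow> nat \<Rightarrow> (nat \<Rightarrow> nat \<Rightarrow> bool) \<Rightarrow>
    nat \<Rightarrow> nat \<Rightarrow> (nat \<Rightarrow> nat \<Rightarrow> bool) \<Rightarrow> bool" where
  "contains k l P m n M \<longleftrightarrow>
     (\<exists>r c :: nat \<Rightarrow> nat.
        r 0 = 0 \<and> r k = m \<and> (\<forall>i<k. r i < r (Suc i)) \<and>
        c 0 = 0 \<and> c l = n \<and> (\<forall>j<l. c j < c (Suc j)) \<and>
        (\<forall>i\<in>{1..k}. \<forall>j\<in>{1..l}. P i j \<longrightarrow>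
           (\<exists>a\<in>{r (i - 1)<..r i}. \<exists>b\<in>{c (j - 1)<..c j}. M a b)))"

definition avoids :: "nat \<Rightarrow> nat \<Rightarrow> (nat \<Rightarrow> nat \<Rightarrow> bool) \<Rightarrow>
    nat \<Rightarrow> nat \<Rightarrow> (nat \<Rightarrow> nat \<Rightarrow> bool) \<Rightarrow> bool" where
  "avoids k l P m n M \<longleftrightarrow> \<not> contains k l P m n M"

definition D2 :: "nat \<Rightarrow> nat \<Rightarrow> bool" where
  "D2 i j \<longleftrightarrow> (i = 1 \<and> j = 1) \<or> (i = 2 \<and> j = 2)"

definition D2bar :: "nat \<Rightarrow> nat \<Rightarrow> bool" where
  "D2bar i j \<longleftrightarrow> (i = 1 \<and> j = 2) \<or> (i = 2 \<and> j = 1)"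

definition set_one :: "(nat \<Rightarrow> nat \<Rightarrow> bool) \<Rightarrow> nat \<Rightarrow> nat \<Rightarrow> nat \<Rightarrow> nat \<Rightarrow> bool" where
  "set_one M a b = (\<lambda>i j. if i = a \<and> j = b then True else M i j)"

definition critical :: "nat \<Rightarrow> nat \<Rightarrow> (nat \<Rightarrow> nat \<Rightarrow> bool) \<Rightarrow>
    nat \<Rightarrow> nat \<Rightarrow> (nat \<Rightarrow> nat \<Rightarrow> bool) \<Rightarrow> bool" where
  "critical k l P m n M \<longleftrightarrow> avoids k l P m n M \<and>
     (\<forall>a\<in>{1..m}. \<forall>b\<in>{1..n}. \<not> M a b \<longrightarrow> contains k l P m n (set_one M a b))"

definition zero_runs :: "nat \<Rightarrow> (nat \<Rightarrow> nat \<Rightarrow> bool) \<Rightarrow> nat \<Rightarrow> nat set set" where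
  "zero_runs n M a = {S. \<exists>s t. S = {s..t} \<and> 1 \<le> s \<and> s \<le> t \<and> t \<le> n \<and>
       (\<forall>j\<in>S. \<not> M a j) \<and> (s = 1 \<or> M a (s - 1)) \<and> (t = n \<or> M a (t + 1))}"

definition row_complexity :: "nat \<Rightarrow> (nat \<Rightarrow> nat \<Rightarrow> bool) \<Rightarrow> nat \<Rightarrow> nat" where
  "row_complexity n M a = card (zero_runs n M a)"

definition row_bounding :: "nat \<Rightarrow> nat \<Rightarrow> (nat \<Rightarrow> nat \<Rightarrow> bool) \<Rightarrow> bool" where
  "row_bounding k l P \<longleftrightarrow>
     (\<exists>C::nat. \<forall>m n M. critical k l P m n M \<longrightarrow>
        (\<forall>a\<in>{1..m}. row_complexity n M a \<le> C))"

end

theory Submission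
  imports Defs "HOL-Library.FuncSet"
begin

text \<open>Let M be critical and a a row of M. Turning the last entry of a horizontal 0-run of
  row a into a 1 creates a copy of P in which the new entry lies in the block of a 1-entry
  (i,j) of P, and the column block of j contains no 1 of row a of M. If row a had more than
  k l^2 runs, more than l of them would share the same (i,j); take the leftmost and the
  rightmost of these. Row a has at least l 1-entries strictly between the two flipped entries,
  all to the right of the column block of j in the left copy and to the left of it in the
  right copy. If P avoids D2, the 1-entries of P above row i lie weakly right of those in row i
  and the ones below lie weakly left of them. Hence taking the rows above i from the right copy
  and those below i from the left copy, the columns left of row i's 1-entries from the left
  copy and those right of them from the right copy, and mapping row i onto row a with its
  1-entries on the 1s in between, gives a copy of P in M itself. For D2bar the two copies
  exchange their roles on the rows.\<close>

abbreviation block :: "(nat \<Rightarrow> nat) \<Rightarrow> nat \<Rightarrow> nat set" where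
  "block r i \<equiv> {r (i - 1)<..r i}"

definition is_partition :: "nat \<Rightarrow> nat \<Rightarrow> (nat \<Rightarrow> nat) \<Rightarrow> bool" where
  "is_partition k m r \<longleftrightarrow> r 0 = 0 \<and> r k = m \<and> (\<forall>i<k. r i < r (Suc i))"

definition embeds :: "nat \<Rightarrow> nat \<Rightarrow> (nat \<Rightarrow> nat \<Rightarrow> bool) \<Rightarrow> nat \<Rightarrow> nat \<Rightarrow>
    (nat \<Rightarrow> nat \<Rightarrow> bool) \<Rightarrow> (nat \<Rightarrow> nat) \<Rightarrow> (nat \<Rightarrow> nat) \<Rightarrow> bool" where
  "embeds k l P m n M r c \<longleftrightarrow> is_partition k m r \<and> is_partition l n c \<and>
     (\<forall>i\<in>{1..k}. \<forall>j\<in>{1..l}. P i j \<longrightarrow> (\<exists>x\<in>block r i. \<exists>y\<in>block c j. M x y))"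

lemma contains_iff_embeds: "contains k l P m n M \<longleftrightarrow> (\<exists>r c. embeds k l P m n M r c)"
  unfolding contains_def embeds_def is_partition_def by blast

lemma is_partition_less:
  assumes "is_partition k m r" "i < j" "j \<le> k"
  shows "r i < r j"
  using assms(2,3)
proof (induction j rule: less_Suc_induct)
  case (1 j)
  then show ?case using assms(1) unfolding is_partition_def by simp
next
  case (2 i j h)
  then show ?case by simp
qed

lemma is_partition_le:
  assumes "is_partition k m r" "i \<le> j" "j \<le> k"
  shows "r i \<le> r j"
  using is_partition_less[OF assms(1), of i j] assms(2,3) by (cases "i = j") auto

lemma is_partition_block_unique:
  assumes "is_partition k m r" "i \<in> {1..k}" "i' \<in> {1..k}" "x \<in> block r i" "x \<in> block r i'"
  shows "i = i'"
proof (rule ccontr)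
  have less: "False" if "i < i'" "i \<in> {1..k}" "i' \<in> {1..k}" "x \<in> block r i" "x \<in> block r i'"
    for i i'
  proof -
    have "r i \<le> r (i' - 1)" by (rule is_partition_le[OF assms(1)]) (use that in auto)
    then show False using that by auto
  qed
  assume "i \<noteq> i'"
  then show False using less assms(2-) by (metis linorder_neqE_nat)
qed

lemma is_partition_block_exists:
  assumes "is_partition k m r" "x \<in> {1..m}"
  shows "\<exists>i\<in>{1..k}. x \<in> block r i"
proof -
  have ex: "\<exists>i. i \<le> k \<and> x \<le> r i" using assms unfolding is_partition_def by auto
  define i where "i = (LEAST i. i \<le> k \<and> x \<le> r i)"
  have i: "i \<le> k" "x \<le> r i" unfolding i_def using LeastI_ex[OF ex] by auto
  have "i \<noteq> 0" using i assms unfolding is_partition_def by (cases i) auto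
  moreover have "r (i - 1) < x"
    using not_less_Least[of "i - 1" "\<lambda>i. i \<le> k \<and> x \<le> r i"] i \<open>i \<noteq> 0\<close>
    unfolding i_def by auto
  ultimately show ?thesis using i by auto
qed

definition splice :: "nat \<Rightarrow> (nat \<Rightarrow> nat) \<Rightarrow> (nat \<Rightarrow> nat) \<Rightarrow> nat \<Rightarrow> nat" where
  "splice i f g x = (if x < i then f x else g x)"

lemma splice_steps:
  assumes "\<And>x. lo \<le> x \<Longrightarrow> Suc x < i \<Longrightarrow> f x < f (Suc x)"
    and "\<And>x. i \<le> x \<Longrightarrow> x < hi \<Longrightarrow> g x < g (Suc x)"
    and "lo < i \<Longrightarrow> f (i - 1) < g i"
    and "lo \<le> x" "x < hi"
  shows "splice i f g x < splice i f g (Suc x)"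
  using assms by (cases "Suc x < i"; cases "Suc x = i") (auto simp: splice_def)

lemma is_partition_splice:
  assumes "is_partition k m f" "is_partition k m g" "0 < i" "i \<le> k" "f (i - 1) < g i"
  shows "is_partition k m (splice i f g)"
  using assms splice_steps[of 0 i f k g]
  unfolding is_partition_def by (auto simp: splice_def)

lemma embeds_set_one_cell:
  assumes "embeds k l P m n (set_one M a b) r c" "i \<in> {1..k}" "j \<in> {1..l}" "P i j"
    and "a \<notin> block r i \<or> b \<notin> block c j"
  shows "\<exists>x\<in>block r i. \<exists>y\<in>block c j. M x y"
  using assms unfolding embeds_def set_one_def by fastforce

lemma embeds_set_one_imp_embeds:
  assumes e: "embeds k l P m n (set_one M a b) r c"
    and i0: "i0 \<in> {1..k}" "a \<in> block r i0" and j0: "j0 \<in> {1..l}" "b \<in> block c j0"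
    and cell: "P i0 j0 \<Longrightarrow> \<exists>x\<in>block r i0. \<exists>y\<in>block c j0. M x y"
  shows "embeds k l P m n M r c"
proof -
  have r: "is_partition k m r" and c: "is_partition l n c" using e unfolding embeds_def by auto
  have "\<exists>x\<in>block r i. \<exists>y\<in>block c j. M x y"
    if "i \<in> {1..k}" "j \<in> {1..l}" "P i j" for i j
  proof (cases "a \<in> block r i \<and> b \<in> block c j")
    case True
    then have "i = i0" "j = j0"
      using is_partition_block_unique[OF r] is_partition_block_unique[OF c] that i0 j0 by blast+
    then show ?thesis using cell that by simp
  next
    case False
    then show ?thesis using embeds_set_one_cell[OF e that] by blast
  qed
  then show ?thesis using r c unfolding embeds_def by blast
qed

definition flip_witness :: "nat \<Rightarrow> nat \<Rightarrow> (nat \<Rightarrow> nat \<Rightarrow> bool) \<Rightarrow> nat \<Rightarrow> nat \<Rightarrow>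
    (nat \<Rightarrow> nat \<Rightarrow> bool) \<Rightarrow> nat \<Rightarrow> nat \<Rightarrow> (nat \<Rightarrow> nat) \<Rightarrow> (nat \<Rightarrow> nat) \<Rightarrow> nat \<Rightarrow> nat \<Rightarrow> bool"
  where
  "flip_witness k l P m n M a b r c i j \<longleftrightarrow> embeds k l P m n (set_one M a b) r c \<and>
     i \<in> {1..k} \<and> j \<in> {1..l} \<and> P i j \<and> a \<in> block r i \<and> b \<in> block c j \<and>
     (\<forall>y\<in>block c j. \<not> M a y)"

lemma critical_flip_witness:
  assumes cr: "critical k l P m n M" and a: "a \<in> {1..m}" and b: "b \<in> {1..n}" and "\<not> M a b"
  shows "\<exists>r c i j. flip_witness k l P m n M a b r c i j"
proof -
  have av: "\<not> embeds k l P m n M r c" for r c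
    using cr unfolding critical_def avoids_def contains_iff_embeds by blast
  obtain r c where e: "embeds k l P m n (set_one M a b) r c"
    using cr a b \<open>\<not> M a b\<close> unfolding critical_def contains_iff_embeds by blast
  obtain i where i: "i \<in> {1..k}" "a \<in> block r i"
    using is_partition_block_exists[of k m r a] e a unfolding embeds_def by blast
  obtain j where j: "j \<in> {1..l}" "b \<in> block c j"
    using is_partition_block_exists[of l n c b] e b unfolding embeds_def by blast
  have "P i j" "\<forall>y\<in>block c j. \<not> M a y"
    using embeds_set_one_imp_embeds[OF e i j] av i(2) by blast+
  then show ?thesis using e i j unfolding flip_witness_def by blast
qed

subsection \<open>Patterns avoiding D2 or its mirror image\<close>

definition two_blocks :: "nat \<Rightarrow> nat \<Rightarrow> nat \<Rightarrow> nat" where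
  "two_blocks i k x = (if x = 0 then 0 else if x = 1 then i else k)"

lemma contains_two_by_two:
  assumes "0 < i" "i < k" "0 < j" "j < l"
    and "\<And>s t. Q s t \<Longrightarrow> \<exists>x\<in>block (two_blocks i k) s. \<exists>y\<in>block (two_blocks j l) t. P x y"
  shows "contains 2 2 Q k l P"
proof -
  have "is_partition 2 k (two_blocks i k)" "is_partition 2 l (two_blocks j l)"
    using assms(1-4) by (auto simp: is_partition_def two_blocks_def less_Suc_eq numeral_2_eq_2)
  then show ?thesis
    unfolding contains_def is_partition_def using assms(5) by blast
qed

lemma avoids_D2_imp_le:
  assumes "avoids 2 2 D2 k l P" "P i j" "P i' j'" "1 \<le> i" "i < i'" "i' \<le> k" "1 \<le> j" "j' \<le> l"
  shows "j' \<le> j"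
proof (rule ccontr)
  assume "\<not> j' \<le> j"
  have "contains 2 2 D2 k l P"
  proof (rule contains_two_by_two)
    show "0 < i" "i < k" "0 < j" "j < l" using assms \<open>\<not> j' \<le> j\<close> by auto
    fix s t assume "D2 s t"
    then consider "s = 1" "t = 1" | "s = 2" "t = 2" unfolding D2_def by blast
    then show "\<exists>x\<in>block (two_blocks i k) s. \<exists>y\<in>block (two_blocks j l) t. P x y"
    proof cases
      case 1
      then show ?thesis using assms by (intro bexI[of _ i] bexI[of _ j]) (auto simp: two_blocks_def)
    next
      case 2
      then show ?thesis using assms \<open>\<not> j' \<le> j\<close>
        by (intro bexI[of _ i'] bexI[of _ j']) (auto simp: two_blocks_def)
    qed
  qed
  then show False using assms(1) unfolding avoids_def by blast
qed

lemma avoids_D2bar_imp_le: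
  assumes "avoids 2 2 D2bar k l P" "P i j" "P i' j'" "1 \<le> i" "i < i'" "i' \<le> k" "1 \<le> j'" "j \<le> l"
  shows "j \<le> j'"
proof (rule ccontr)
  assume "\<not> j \<le> j'"
  have "contains 2 2 D2bar k l P"
  proof (rule contains_two_by_two)
    show "0 < i" "i < k" "0 < j'" "j' < l" using assms \<open>\<not> j \<le> j'\<close> by auto
    fix s t assume "D2bar s t"
    then consider "s = 1" "t = 2" | "s = 2" "t = 1" unfolding D2bar_def by blast
    then show "\<exists>x\<in>block (two_blocks i k) s. \<exists>y\<in>block (two_blocks j' l) t. P x y"
    proof cases
      case 1
      then show ?thesis using assms \<open>\<not> j \<le> j'\<close>
        by (intro bexI[of _ i] bexI[of _ j]) (auto simp: two_blocks_def)
    next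
      case 2
      then show ?thesis using assms by (intro bexI[of _ i'] bexI[of _ j']) (auto simp: two_blocks_def)
    qed
  qed
  then show False using assms(1) unfolding avoids_def by blast
qed

subsection \<open>Gluing two copies of P along a row\<close>

lemma splice_columns:
  assumes c1: "is_partition l n c1" and c2: "is_partition l n c2"
    and pq: "1 \<le> p" "p \<le> q" "q \<le> l"
    and ys_mono: "\<And>j. p \<le> j \<Longrightarrow> j < q \<Longrightarrow> ys j < ys (Suc j)"
    and ys_bounds: "\<And>j. p \<le> j \<Longrightarrow> j \<le> q \<Longrightarrow> c1 p \<le> ys j \<and> ys j \<le> c2 (q - 1)"
  shows "is_partition l n (splice p c1 (splice q ys c2))"
    and "j \<le> p \<Longrightarrow> block c1 j \<subseteq> block (splice p c1 (splice q ys c2)) j"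
    and "q \<le> j \<Longrightarrow> block c2 j \<subseteq> block (splice p c1 (splice q ys c2)) j"
    and "p \<le> j \<Longrightarrow> j \<le> q \<Longrightarrow> ys j \<in> block (splice p c1 (splice q ys c2)) j"
proof -
  let ?cc = "splice p c1 (splice q ys c2)"
  have c1_step: "c1 (p - 1) < c1 p" and c2_step: "c2 (q - 1) < c2 q"
    using is_partition_less[OF c1, of "p - 1" p] is_partition_less[OF c2, of "q - 1" q] pq
    by auto
  have cc_p: "c1 p \<le> ?cc p"
    using ys_bounds[of p] c2_step pq by (auto simp: splice_def)
  have cc_q: "?cc (q - 1) \<le> c2 (q - 1)"
    using ys_bounds[of "q - 1"] ys_bounds[of p] c1_step pq by (cases "q = p") (auto simp: splice_def)
  have ys_c2: "ys (q - 1) < c2 q" if "p < q"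
    using ys_bounds[of "q - 1"] c2_step that[unfolded less_eq_Suc_le] by (simp add: le_diff_conv2)
  have inner: "splice q ys c2 x < splice q ys c2 (Suc x)" if "p \<le> x" "x < l" for x
    using c2 ys_mono ys_c2 pq that
    by (intro splice_steps[of p q ys l c2]) (auto simp: is_partition_def)
  have "?cc x < ?cc (Suc x)" if "x < l" for x
    using c1 inner cc_p c1_step pq that
    by (intro splice_steps[of 0 p c1 l]) (auto simp: is_partition_def splice_def)
  then show "is_partition l n ?cc"
    using c1 c2 pq by (auto simp: is_partition_def splice_def)
  show "j \<le> p \<Longrightarrow> block c1 j \<subseteq> block ?cc j"
    using cc_p pq by (cases "j = p") (auto simp: splice_def)
  show "q \<le> j \<Longrightarrow> block c2 j \<subseteq> block ?cc j"
    using cc_q pq by (cases "j = q") (auto simp: splice_def)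
  show "ys j \<in> block ?cc j" if "p \<le> j" "j \<le> q"
  proof -
    have "?cc (j - 1) < ys j"
      using ys_bounds[of p] ys_mono[of "j - 1"] c1_step that pq
      by (cases "j = p") (auto simp: splice_def)
    moreover have "ys j \<le> ?cc j"
      using ys_bounds[of j] c2_step that pq by (cases "j = q") (auto simp: splice_def)
    ultimately show ?thesis by simp
  qed
qed

text \<open>Rows of P other than i0 are copied from the first embedding if their 1-entries lie in
  columns up to p and from the second one if they lie in columns from q on; row i0 goes to
  row a and its 1-entries, which lie in columns p..q, to the 1-entries ys p < ... < ys q of
  row a.\<close>

lemma embeds_glue:
  assumes e1: "embeds k l P m n (set_one M a b1) r1 c1"
    and e2: "embeds k l P m n (set_one M a b2) r2 c2"
    and i0: "i0 \<in> {1..k}" "a \<in> block r1 i0" "a \<in> block r2 i0"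
    and rr: "is_partition k m rr" "a \<in> block rr i0"
    and rows: "\<And>i j. i \<in> {1..k} \<Longrightarrow> j \<in> {1..l} \<Longrightarrow> P i j \<Longrightarrow> i \<noteq> i0 \<Longrightarrow>
        j \<le> p \<and> block rr i = block r1 i \<or> q \<le> j \<and> block rr i = block r2 i"
    and row_i0: "\<And>j. j \<in> {1..l} \<Longrightarrow> P i0 j \<Longrightarrow> p \<le> j \<and> j \<le> q"
    and pq: "1 \<le> p" "p \<le> q" "q \<le> l"
    and ys_mono: "\<And>j. p \<le> j \<Longrightarrow> j < q \<Longrightarrow> ys j < ys (Suc j)"
    and ys_one: "\<And>j. p \<le> j \<Longrightarrow> j \<le> q \<Longrightarrow> M a (ys j)"
    and ys_bounds: "\<And>j. p \<le> j \<Longrightarrow> j \<le> q \<Longrightarrow> c1 p \<le> ys j \<and> ys j \<le> c2 (q - 1)"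
  shows "embeds k l P m n M rr (splice p c1 (splice q ys c2))"
proof -
  let ?cc = "splice p c1 (splice q ys c2)"
  have r1: "is_partition k m r1" and c1: "is_partition l n c1"
    and r2: "is_partition k m r2" and c2: "is_partition l n c2"
    using e1 e2 unfolding embeds_def by auto
  note cols = splice_columns[of l n c1 c2 p q ys, OF c1 c2 pq ys_mono ys_bounds]
  have "\<exists>x\<in>block rr i. \<exists>y\<in>block ?cc j. M x y"
    if ij: "i \<in> {1..k}" "j \<in> {1..l}" "P i j" for i j
  proof (cases "i = i0")
    case True
    then show ?thesis using rr(2) ys_one[of j] row_i0[of j] cols(4)[of j] ij by blast
  next
    case False
    have off1: "a \<notin> block r1 i" and off2: "a \<notin> block r2 i"
      using is_partition_block_unique[OF r1 ij(1) i0(1)] is_partition_block_unique[OF r2 ij(1) i0(1)]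
        i0 False by blast+
    from rows[OF ij False] show ?thesis
    proof
      assume "j \<le> p \<and> block rr i = block r1 i"
      then show ?thesis using embeds_set_one_cell[OF e1 ij] off1 cols(2)[of j] by blast
    next
      assume "q \<le> j \<and> block rr i = block r2 i"
      then show ?thesis using embeds_set_one_cell[OF e2 ij] off2 cols(3)[of j] by blast
    qed
  qed
  then show ?thesis using rr(1) cols(1) unfolding embeds_def by blast
qed

lemma finite_increasing_enumeration:
  assumes "finite Y" "N \<le> card Y"
  obtains ys :: "nat \<Rightarrow> 'a::linorder"
  where "\<And>j. p \<le> j \<Longrightarrow> Suc j < p + N \<Longrightarrow> ys j < ys (Suc j)"
    and "\<And>j. p \<le> j \<Longrightarrow> j < p + N \<Longrightarrow> ys j \<in> Y"
proof -
  let ?xs = "sorted_list_of_set Y"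
  have xs: "sorted_wrt (<) ?xs" "length ?xs = card Y" "set ?xs = Y"
    using assms(1) by auto
  show thesis
  proof (rule that[of "\<lambda>j. ?xs ! (j - p)"])
    fix j assume "p \<le> j" "Suc j < p + N"
    then show "?xs ! (j - p) < ?xs ! (Suc j - p)"
      using sorted_wrt_nth_less[OF xs(1), of "j - p" "Suc j - p"] xs(2) assms(2) by auto
  next
    fix j assume "p \<le> j" "j < p + N"
    then show "?xs ! (j - p) \<in> Y" using xs(2,3) assms(2) nth_mem[of "j - p" ?xs] by auto
  qed
qed

lemma flip_witnesses_glue:
  assumes w1: "flip_witness k l P m n M a b1 r1 c1 i0 j0"
    and w2: "flip_witness k l P m n M a b2 r2 c2 i0 j0"
    and Y: "finite Y" "l \<le> card Y" "\<forall>y\<in>Y. M a y \<and> b1 < y \<and> y < b2"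
    and row_i0: "\<And>j. j \<in> {1..l} \<Longrightarrow> P i0 j \<Longrightarrow> p \<le> j \<and> j \<le> q"
    and pq: "1 \<le> p" "q \<le> l"
    and rr: "is_partition k m rr" "a \<in> block rr i0"
    and rows: "\<And>i j. i \<in> {1..k} \<Longrightarrow> j \<in> {1..l} \<Longrightarrow> P i j \<Longrightarrow> i \<noteq> i0 \<Longrightarrow>
        j \<le> p \<and> block rr i = block r1 i \<or> q \<le> j \<and> block rr i = block r2 i"
  shows "contains k l P m n M"
proof -
  have e1: "embeds k l P m n (set_one M a b1) r1 c1"
    and e2: "embeds k l P m n (set_one M a b2) r2 c2"
    and i0: "i0 \<in> {1..k}" "a \<in> block r1 i0" "a \<in> block r2 i0"
    and j0: "j0 \<in> {1..l}" "P i0 j0" "b1 \<in> block c1 j0" "b2 \<in> block c2 j0"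
    and free1: "\<forall>y\<in>block c1 j0. \<not> M a y" and free2: "\<forall>y\<in>block c2 j0. \<not> M a y"
    using w1 w2 unfolding flip_witness_def by auto
  have c1: "is_partition l n c1" and c2: "is_partition l n c2"
    using e1 e2 unfolding embeds_def by auto
  have pj0: "p \<le> j0" "j0 \<le> q" using row_i0 j0 by auto
  have Y_bounds: "c1 p \<le> y \<and> y \<le> c2 (q - 1)" if "y \<in> Y" for y
  proof -
    have "c1 j0 < y" "y \<le> c2 (j0 - 1)" using Y(3) that j0 free1 free2 by fastforce+
    moreover have "c1 p \<le> c1 j0" "c2 (j0 - 1) \<le> c2 (q - 1)"
      using is_partition_le[OF c1, of p j0] is_partition_le[OF c2, of "j0 - 1" "q - 1"] pj0 pq
      by auto
    ultimately show ?thesis by linarith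
  qed
  have "q - p + 1 \<le> card Y" using Y(2) pq pj0 by linarith
  then obtain ys :: "nat \<Rightarrow> nat"
    where ys_mono: "\<And>j. p \<le> j \<Longrightarrow> Suc j < p + (q - p + 1) \<Longrightarrow> ys j < ys (Suc j)"
      and ys_Y: "\<And>j. p \<le> j \<Longrightarrow> j < p + (q - p + 1) \<Longrightarrow> ys j \<in> Y"
    using finite_increasing_enumeration[where p = p, OF Y(1)] by blast
  have "embeds k l P m n M rr (splice p c1 (splice q ys c2))"
  proof (rule embeds_glue[OF e1 e2 i0 rr rows row_i0])
    show "1 \<le> p" "p \<le> q" "q \<le> l" using pq pj0 by auto
    show "ys j < ys (Suc j)" if "p \<le> j" "j < q" for j using ys_mono that by auto
    show "M a (ys j)" "c1 p \<le> ys j \<and> ys j \<le> c2 (q - 1)" if "p \<le> j" "j \<le> q" for j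
      using ys_Y[of j] Y(3) Y_bounds that pj0 by auto
  qed
  then show ?thesis unfolding contains_iff_embeds by blast
qed

lemma flip_witnesses_ones_between_contains:
  assumes D: "avoids 2 2 D2 k l P \<or> avoids 2 2 D2bar k l P"
    and w1: "flip_witness k l P m n M a b1 r1 c1 i0 j0"
    and w2: "flip_witness k l P m n M a b2 r2 c2 i0 j0"
    and Y: "finite Y" "l \<le> card Y" "\<forall>y\<in>Y. M a y \<and> b1 < y \<and> y < b2"
  shows "contains k l P m n M"
proof -
  have r1: "is_partition k m r1" and r2: "is_partition k m r2"
    and i0: "i0 \<in> {1..k}" "a \<in> block r1 i0" "a \<in> block r2 i0"
    and j0: "j0 \<in> {1..l}" "P i0 j0"
    using w1 w2 unfolding flip_witness_def embeds_def by auto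
  define J where "J = {j \<in> {1..l}. P i0 j}"
  define p where "p = Min J"
  define q where "q = Max J"
  have J: "finite J" "j0 \<in> J" using j0 unfolding J_def by auto
  then have "p \<in> J" "q \<in> J" unfolding p_def q_def using Min_in Max_in by blast+
  have row_i0: "\<And>j. j \<in> {1..l} \<Longrightarrow> P i0 j \<Longrightarrow> p \<le> j \<and> j \<le> q"
    unfolding p_def q_def using J by (auto simp: J_def)
  from \<open>p \<in> J\<close> \<open>q \<in> J\<close> have pq: "1 \<le> p" "q \<le> l" and Pp: "P i0 p" and Pq: "P i0 q"
    unfolding J_def by auto
  note glue = flip_witnesses_glue[OF w1 w2 Y row_i0 pq]
  from D show ?thesis
  proof
    assume D2: "avoids 2 2 D2 k l P"
    show ?thesis
    proof (rule glue)
      show "is_partition k m (splice i0 r2 r1)"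
        using is_partition_splice[OF r2 r1] i0 by auto
      show "a \<in> block (splice i0 r2 r1) i0" using i0 by (simp add: splice_def)
      fix i j assume ij: "i \<in> {1..k}" "j \<in> {1..l}" "P i j" "i \<noteq> i0"
      show "j \<le> p \<and> block (splice i0 r2 r1) i = block r1 i \<or>
        q \<le> j \<and> block (splice i0 r2 r1) i = block r2 i"
        using avoids_D2_imp_le[OF D2 ij(3) Pq] avoids_D2_imp_le[OF D2 Pp ij(3)] ij i0 pq
        by (cases "i < i0") (auto simp: splice_def)
    qed
  next
    assume D2bar: "avoids 2 2 D2bar k l P"
    show ?thesis
    proof (rule glue)
      show "is_partition k m (splice i0 r1 r2)"
        using is_partition_splice[OF r1 r2] i0 by auto
      show "a \<in> block (splice i0 r1 r2) i0" using i0 by (simp add: splice_def)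
      fix i j assume ij: "i \<in> {1..k}" "j \<in> {1..l}" "P i j" "i \<noteq> i0"
      show "j \<le> p \<and> block (splice i0 r1 r2) i = block r1 i \<or>
        q \<le> j \<and> block (splice i0 r1 r2) i = block r2 i"
        using avoids_D2bar_imp_le[OF D2bar ij(3) Pp] avoids_D2bar_imp_le[OF D2bar Pq ij(3)] ij i0 pq
        by (cases "i < i0") (auto simp: splice_def)
    qed
  qed
qed

subsection \<open>Horizontal 0-runs\<close>

lemma finite_zero_runs: "finite (zero_runs n M a)"
  by (rule finite_subset[of _ "Pow {1..n}"]) (auto simp: zero_runs_def)

lemma zero_run_Max:
  assumes "S \<in> zero_runs n M a"
  shows "Max S \<in> {1..n}" "\<not> M a (Max S)" "Max S < n \<Longrightarrow> M a (Suc (Max S))"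
proof -
  obtain s t where S: "S = {s..t}" "1 \<le> s" "s \<le> t" "t \<le> n" "\<forall>j\<in>S. \<not> M a j"
    "t = n \<or> M a (t + 1)"
    using assms unfolding zero_runs_def by blast
  have "Max S = t" using S by (intro Max_eqI) auto
  then show "Max S \<in> {1..n}" "\<not> M a (Max S)" "Max S < n \<Longrightarrow> M a (Suc (Max S))"
    using S by auto
qed

lemma inj_on_Max_zero_runs: "inj_on Max (zero_runs n M a)"
proof (rule inj_onI)
  have start_le: "s' \<le> s"
    if "{s..t} \<in> zero_runs n M a" "{s'..t} \<in> zero_runs n M a" "s \<le> t" "s' \<le> t" for s s' t
  proof (rule ccontr)
    assume "\<not> s' \<le> s"
    have "s' = 1 \<or> M a (s' - 1)" using that(2,4) unfolding zero_runs_def by auto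
    moreover have "\<forall>j\<in>{s..t}. \<not> M a j" "1 \<le> s" using that(1,3) unfolding zero_runs_def by auto
    moreover have "s' - 1 \<in> {s..t}" using \<open>\<not> s' \<le> s\<close> that(4) by auto
    ultimately show False using \<open>\<not> s' \<le> s\<close> by auto
  qed
  fix S S' assume S: "S \<in> zero_runs n M a" and S': "S' \<in> zero_runs n M a" and "Max S = Max S'"
  obtain s t s' t' where "S = {s..t}" "s \<le> t" "S' = {s'..t'}" "s' \<le> t'"
    using S S' unfolding zero_runs_def by blast
  moreover have "Max {s..t} = t" "Max {s'..t'} = t'" using calculation by (auto intro: Max_eqI)
  ultimately show "S = S'"
    using start_le[of s t s'] start_le[of s' t s] S S' \<open>Max S = Max S'\<close> by auto
qed

lemma zero_runs_ones_between:
  assumes T: "T \<subseteq> zero_runs n M a" "finite T" and S1: "S1 \<in> T" and S2: "S2 \<in> T"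
    and extremal: "\<And>S. S \<in> T \<Longrightarrow> Max S1 \<le> Max S \<and> Max S \<le> Max S2"
  shows "\<exists>Y. finite Y \<and> card Y = card T - 1 \<and> (\<forall>y\<in>Y. M a y \<and> Max S1 < y \<and> y < Max S2)"
proof (intro exI conjI)
  let ?Y = "(\<lambda>S. Suc (Max S)) ` (T - {S2})"
  have inj: "inj_on Max T" using inj_on_subset[OF inj_on_Max_zero_runs T(1)] .
  then have "inj_on (\<lambda>S. Suc (Max S)) (T - {S2})" by (auto simp: inj_on_def)
  with S2 show "card ?Y = card T - 1" by (simp add: card_image card_Diff_singleton)
  show "finite ?Y" using T(2) by simp
  show "\<forall>y\<in>?Y. M a y \<and> Max S1 < y \<and> y < Max S2"
  proof
    fix y assume "y \<in> ?Y"
    then obtain S where S: "S \<in> T" "S \<noteq> S2" "y = Suc (Max S)" by auto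
    have "Max S \<noteq> Max S2" using inj S S2 unfolding inj_on_def by blast
    then have "Max S < Max S2" using extremal[OF S(1)] by simp
    moreover have "Max S2 \<le> n" "\<not> M a (Max S2)" using zero_run_Max[of S2 n M a] S2 T(1) by auto
    ultimately have "M a y" "y \<noteq> Max S2" using zero_run_Max(3)[of S n M a] S T(1) by auto
    then show "M a y \<and> Max S1 < y \<and> y < Max S2"
      using \<open>Max S < Max S2\<close> extremal[OF S(1)] S(3) by auto
  qed
qed

lemma critical_zero_runs_same_cell:
  assumes cr: "critical k l P m n M" and a: "a \<in> {1..m}"
    and many: "k * l * l < row_complexity n M a"
  obtains T i j where "T \<subseteq> zero_runs n M a" "l < card T"
    and "\<And>S. S \<in> T \<Longrightarrow> \<exists>r c. flip_witness k l P m n M a (Max S) r c i j"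
proof -
  let ?Z = "zero_runs n M a" and ?C = "{1..k} \<times> {1..l}"
  have many: "card ?C * l < card ?Z"
    using many by (simp add: row_complexity_def card_cartesian_product)
  have "\<exists>x. x \<in> ?C \<and> (\<exists>r c. flip_witness k l P m n M a (Max S) r c (fst x) (snd x))"
    if S: "S \<in> ?Z" for S
  proof -
    obtain r c i j where w: "flip_witness k l P m n M a (Max S) r c i j"
      using critical_flip_witness[OF cr a zero_run_Max(1,2)[OF S]] by blast
    then have "(i, j) \<in> ?C" unfolding flip_witness_def by auto
    with w show ?thesis by auto
  qed
  then obtain g where g: "\<forall>S\<in>?Z. g S \<in> ?C \<and>
      (\<exists>r c. flip_witness k l P m n M a (Max S) r c (fst (g S)) (snd (g S)))"
    by metis
  have "g \<in> ?Z \<rightarrow> ?C" using g by blast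
  moreover have "?Z \<noteq> {}" using many by (metis card.empty not_less_zero)
  then have "?C \<noteq> {}" using g by fast
  ultimately obtain x where "x \<in> ?C" and fibre: "card ?Z \<le> card (g -` {x} \<inter> ?Z) * card ?C"
    using pigeonhole_card[of g ?Z ?C] finite_zero_runs by auto
  have "l < card (g -` {x} \<inter> ?Z)"
  proof (rule ccontr)
    assume "\<not> l < card (g -` {x} \<inter> ?Z)"
    then have "card (g -` {x} \<inter> ?Z) * card ?C \<le> card ?C * l" by (simp add: mult.commute)
    then show False using many fibre by linarith
  qed
  show thesis
  proof (rule that[of "g -` {x} \<inter> ?Z"])
    show "g -` {x} \<inter> ?Z \<subseteq> ?Z" by blast
    show "l < card (g -` {x} \<inter> ?Z)" by fact
    fix S assume "S \<in> g -` {x} \<inter> ?Z"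
    then have "S \<in> ?Z" "g S = x" by auto
    then show "\<exists>r c. flip_witness k l P m n M a (Max S) r c (fst x) (snd x)" using g by blast
  qed
qed

lemma critical_row_complexity_le:
  assumes D: "avoids 2 2 D2 k l P \<or> avoids 2 2 D2bar k l P"
    and cr: "critical k l P m n M" and a: "a \<in> {1..m}"
  shows "row_complexity n M a \<le> k * l * l"
proof (rule ccontr)
  assume "\<not> ?thesis"
  then have "k * l * l < row_complexity n M a" by simp
  then obtain T i j where T: "T \<subseteq> zero_runs n M a" "l < card T"
    and w: "\<And>S. S \<in> T \<Longrightarrow> \<exists>r c. flip_witness k l P m n M a (Max S) r c i j"
    using critical_zero_runs_same_cell[OF cr a] by blast
  have "finite T" "T \<noteq> {}" using T finite_subset[OF T(1) finite_zero_runs] by auto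
  then have "Min (Max ` T) \<in> Max ` T" "Max (Max ` T) \<in> Max ` T" by auto
  then obtain S1 S2 where S1: "Min (Max ` T) = Max S1" "S1 \<in> T"
    and S2: "Max (Max ` T) = Max S2" "S2 \<in> T"
    by (elim imageE)
  have extremal: "Max S1 \<le> Max S \<and> Max S \<le> Max S2" if "S \<in> T" for S
    using Min_le[of "Max ` T" "Max S"] Max_ge[of "Max ` T" "Max S"] \<open>finite T\<close> that S1(1) S2(1)
    by simp
  obtain Y where Y: "finite Y" "card Y = card T - 1" "\<forall>y\<in>Y. M a y \<and> Max S1 < y \<and> y < Max S2"
    using zero_runs_ones_between[OF T(1) \<open>finite T\<close> S1(2) S2(2) extremal] by blast
  obtain r1 c1 r2 c2 where w1: "flip_witness k l P m n M a (Max S1) r1 c1 i j"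
    and w2: "flip_witness k l P m n M a (Max S2) r2 c2 i j"
    using w[OF S1(2)] w[OF S2(2)] by blast
  have "contains k l P m n M"
    using flip_witnesses_ones_between_contains[OF D w1 w2 Y(1) _ Y(3)] Y(2) T(2) by simp
  then show False using cr unfolding critical_def avoids_def by blast
qed

theorem lemma3p16:
  fixes k l :: nat and P :: "nat \<Rightarrow> nat \<Rightarrow> bool"
  assumes "avoids 2 2 D2 k l P \<or> avoids 2 2 D2bar k l P"
  shows "row_bounding k l P"
  unfolding row_bounding_def using critical_row_complexity_le[OF assms] by blast

end
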